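(* The following are equivalent: (a) the Collatz conjecture: $\sigma_\infty(n)<\infty$ for every positive integer $n$; (b) the space $\{h\in A(D):\mathcal{F}h=h\}$ of eigenvectors of $\mathcal{F}\in\mathcal{L}(A(D))$ for eigenvalue $1$ (together with $0$) has dimension $2$; (c) $\frac{z}{1-z}\in Z$; (d) $\lim_{n\to\infty}\mathcal{F}^n(z+z^2)=\frac{z}{1-z}$ in the topology of $A(D)$.
   Context: $T$ is the Collatz map $T(n)=\frac{3n+1}2$ ($n$ odd), $T(n)=\frac n2$ ($n$ even); for a positive integer $n$, $\sigma_\infty(n)$ is the least $k\ge0$ with $T^k(n)=1$ ($\infty$ if none). $D$ is the open unit disk, $A(D)$ the holomorphic functions on $D$ with the topology of uniform convergence on compact subsets. $\mathcal{F}$ is the operator on $A(D)$ given by $\mathcal{F}\big(\sum_{n\ge0}a_nz^n\big)=\sum_{n\ge0}a_nz^{2n}+\sum_{k\ge0}a_{3k+2}z^{2k+1}$. For $k\ge0$, $Pol_k(z)=\sum_{n\ge1:\,\sigma_\infty(n)=k}z^n$, and $Z$ is the closure in $A(D)$ of $\operatorname{span}\{Pol_k:k\ge0\}$. *)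

theory Defs
  imports "HOL-Analysis.Analysis" "HOL-Library.Extended_Nat" "HOL-Library.Function_Algebras"
begin

definition collatzT :: "nat \<Rightarrow> nat" where
  "collatzT n = (if odd n then (3 * n + 1) div 2 else n div 2)"

definition sigma_inf :: "nat \<Rightarrow> enat" where
  "sigma_inf n = (if \<exists>k. (collatzT ^^ k) n = 1
                  then enat (LEAST k. (collatzT ^^ k) n = 1) else \<infinity>)"

abbreviation diskD :: "complex set" where "diskD \<equiv> ball 0 1"

text \<open>Elements of A(D) are represented as functions holomorphic on D which
  vanish outside D (so that equality of functions is equality on D).\<close>
definition AD :: "(complex \<Rightarrow> complex) set" where
  "AD = {h. h holomorphic_on diskD \<and> (\<forall>z. z \<notin> diskD \<longrightarrow> h z = 0)}"

definition restrD :: "(complex \<Rightarrow> complex) \<Rightarrow> complex \<Rightarrow> complex" where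
  "restrD f = (\<lambda>z. if z \<in> diskD then f z else 0)"

definition tcoeff :: "(complex \<Rightarrow> complex) \<Rightarrow> nat \<Rightarrow> complex" where
  "tcoeff h n = (deriv ^^ n) h 0 / fact n"

definition opF :: "(complex \<Rightarrow> complex) \<Rightarrow> complex \<Rightarrow> complex" where
  "opF h = restrD (\<lambda>z. (\<Sum>n. tcoeff h n * z ^ (2 * n))
                       + (\<Sum>k. tcoeff h (3 * k + 2) * z ^ (2 * k + 1)))"

definition Pol :: "nat \<Rightarrow> complex \<Rightarrow> complex" where
  "Pol k = restrD (\<lambda>z. \<Sum>n. (if n \<ge> 1 \<and> sigma_inf n = enat k then z ^ n else 0))"

definition fscale :: "complex \<Rightarrow> (complex \<Rightarrow> complex) \<Rightarrow> complex \<Rightarrow> complex" where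
  "fscale c f = (\<lambda>z. c * f z)"

definition AD_closure :: "(complex \<Rightarrow> complex) set \<Rightarrow> (complex \<Rightarrow> complex) set" where
  "AD_closure S = {f \<in> AD. \<forall>K. compact K \<and> K \<subseteq> diskD \<longrightarrow>
       (\<forall>e>0. \<exists>g\<in>S. \<forall>z\<in>K. cmod (f z - g z) < e)}"

definition Zspace :: "(complex \<Rightarrow> complex) set" where
  "Zspace = AD_closure (module.span fscale (range Pol))"

end

(* F acts on a power series with bounded coefficients a by a |-> a o T: split the series into
   even and odd exponents and use T(2k) = k, T(2k+1) = 3k+2. Hence F^m(z + z^2) has the
   coefficients [T^m n in {1,2}], the partial sums of the Pol_k are the indicator series of
   {n >= 1. sigma n < N}, and a fixed point of F has Taylor coefficients that are constant on
   the grand orbits {n. T^i n = T^j m} of T.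
   If every n >= 1 reaches 1, there are just two grand orbits, {0} and {n >= 1}, and both
   sequences converge coefficientwise, with bounded coefficients, to the indicator series of
   {n >= 1}, which is z/(1-z). Otherwise some n0 >= 1 never reaches 1: its grand orbit gives a
   third independent fixed point, and its Taylor coefficient vanishes along both sequences,
   whereas that of z/(1-z) is 1. Taylor coefficients are continuous for locally uniform
   convergence (Cauchy's estimate), so neither sequence can approach z/(1-z). *)

theory Submission
  imports Defs "HOL-Complex_Analysis.Complex_Analysis"
begin

section \<open>The Collatz map and its grand orbits\<close>

lemma collatzT_double [simp]: "collatzT (2 * n) = n"
  by (simp add: collatzT_def)

lemma collatzT_Suc_double [simp]: "collatzT (Suc (2 * k)) = 3 * k + 2"
  by (simp add: collatzT_def)

lemma collatzT_1 [simp]: "collatzT 1 = 2" "collatzT (Suc 0) = 2"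
  by (simp_all add: collatzT_def)

lemma collatzT_2 [simp]: "collatzT 2 = 1"
  by (simp add: collatzT_def)

lemma collatzT_le: "collatzT n \<le> 2 * n"
  by (cases "n = 0") (auto simp: collatzT_def)

lemma collatzT_eq_0_iff [simp]: "collatzT n = 0 \<longleftrightarrow> n = 0"
  by (cases "odd n") (auto simp: collatzT_def elim: oddE)

lemma funpow_collatzT_0 [simp]: "(collatzT ^^ k) 0 = 0"
  by (induction k) auto

lemma funpow_collatzT_eq_0_iff [simp]: "(collatzT ^^ k) n = 0 \<longleftrightarrow> n = 0"
  by (induction k) auto

lemma funpow_collatzT_add: "(collatzT ^^ (i + j)) n = (collatzT ^^ i) ((collatzT ^^ j) n)"
  by (simp add: funpow_add)

lemma funpow_collatzT_1: "(collatzT ^^ k) 1 \<in> {1, 2}"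
  by (induction k) auto

lemma sigma_inf_finite_iff: "sigma_inf n < \<infinity> \<longleftrightarrow> (\<exists>k. (collatzT ^^ k) n = 1)"
  by (simp add: sigma_inf_def)

definition grand_orbit :: "nat \<Rightarrow> nat set" where
  "grand_orbit m = {n. \<exists>i j. (collatzT ^^ i) n = (collatzT ^^ j) m}"

lemma self_in_grand_orbit: "m \<in> grand_orbit m"
  unfolding grand_orbit_def by blast

lemma collatzT_in_grand_orbit_iff [simp]: "collatzT n \<in> grand_orbit m \<longleftrightarrow> n \<in> grand_orbit m"
proof
  assume "collatzT n \<in> grand_orbit m"
  then obtain i j where "(collatzT ^^ i) (collatzT n) = (collatzT ^^ j) m"
    by (auto simp: grand_orbit_def)
  then have "(collatzT ^^ Suc i) n = (collatzT ^^ j) m"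
    by (simp add: funpow_swap1)
  then show "n \<in> grand_orbit m"
    unfolding grand_orbit_def by blast
next
  assume "n \<in> grand_orbit m"
  then obtain i j where "(collatzT ^^ i) n = (collatzT ^^ j) m"
    by (auto simp: grand_orbit_def)
  then have "(collatzT ^^ i) (collatzT n) = (collatzT ^^ Suc j) m"
    by (simp flip: funpow_swap1)
  then show "collatzT n \<in> grand_orbit m"
    unfolding grand_orbit_def by blast
qed

lemma grand_orbit_sym:
  assumes "n \<in> grand_orbit m"
  shows "m \<in> grand_orbit n"
proof -
  obtain i j where "(collatzT ^^ i) n = (collatzT ^^ j) m"
    using assms by (auto simp: grand_orbit_def)
  then have "(collatzT ^^ j) m = (collatzT ^^ i) n"
    by simp
  then show ?thesis
    unfolding grand_orbit_def by blast
qed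

lemma grand_orbit_trans:
  assumes "n \<in> grand_orbit m" "m \<in> grand_orbit k"
  shows "n \<in> grand_orbit k"
proof -
  obtain i j where ij: "(collatzT ^^ i) n = (collatzT ^^ j) m"
    using assms(1) by (auto simp: grand_orbit_def)
  obtain i' j' where ij': "(collatzT ^^ i') m = (collatzT ^^ j') k"
    using assms(2) by (auto simp: grand_orbit_def)
  have "(collatzT ^^ (i' + i)) n = (collatzT ^^ (i' + j)) m"
    by (simp add: funpow_collatzT_add ij)
  also have "\<dots> = (collatzT ^^ (j + j')) k"
    by (simp only: add.commute[of i' j] funpow_collatzT_add ij')
  finally show ?thesis
    unfolding grand_orbit_def by blast
qed

lemma grand_orbit_eq_iff: "grand_orbit m = grand_orbit m' \<longleftrightarrow> m \<in> grand_orbit m'"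
  using grand_orbit_sym grand_orbit_trans self_in_grand_orbit by blast

lemma disjoint_grand_orbits: "disjoint (range grand_orbit)"
proof (rule disjointI)
  fix A B
  assume "A \<in> range grand_orbit" "B \<in> range grand_orbit" "A \<noteq> B"
  then obtain m m' where A: "A = grand_orbit m" and B: "B = grand_orbit m'"
    by blast
  show "A \<inter> B = {}"
  proof (rule ccontr)
    assume "A \<inter> B \<noteq> {}"
    then obtain n where "n \<in> grand_orbit m" "n \<in> grand_orbit m'"
      using A B by blast
    then have "grand_orbit n = grand_orbit m" "grand_orbit n = grand_orbit m'"
      by (simp_all add: grand_orbit_eq_iff)
    with A B \<open>A \<noteq> B\<close> show False
      by simp
  qed
qed

lemma grand_orbit_0: "grand_orbit 0 = {0}"
  by (auto simp: grand_orbit_def)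

lemma grand_orbit_0_neq:
  assumes "m \<noteq> 0"
  shows "grand_orbit 0 \<noteq> grand_orbit m"
proof
  assume "grand_orbit 0 = grand_orbit m"
  then have "m \<in> grand_orbit 0"
    by (simp add: self_in_grand_orbit)
  with assms show False
    by (simp add: grand_orbit_0)
qed

lemma grand_orbit_1: "grand_orbit 1 = {n. sigma_inf n < \<infinity>}"
proof (intro set_eqI iffI)
  fix n assume "n \<in> grand_orbit 1"
  then obtain i j where ij: "(collatzT ^^ i) n = (collatzT ^^ j) 1"
    by (auto simp: grand_orbit_def)
  then have "(collatzT ^^ i) n = 1 \<or> (collatzT ^^ Suc i) n = 1"
    using funpow_collatzT_1[of j] by auto
  then show "n \<in> {n. sigma_inf n < \<infinity>}"
    unfolding sigma_inf_finite_iff by blast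
next
  fix n assume "n \<in> {n. sigma_inf n < \<infinity>}"
  then obtain k where "(collatzT ^^ k) n = 1"
    unfolding mem_Collect_eq sigma_inf_finite_iff by blast
  then have "(collatzT ^^ k) n = (collatzT ^^ 0) 1"
    by simp
  then show "n \<in> grand_orbit 1"
    unfolding grand_orbit_def by blast
qed

lemma in_grand_orbit_1I:
  assumes "(collatzT ^^ k) n \<in> {1, 2}"
  shows "n \<in> grand_orbit 1"
proof -
  have "(collatzT ^^ k) n = (collatzT ^^ 0) 1 \<or> (collatzT ^^ k) n = (collatzT ^^ 1) 1"
    using assms by auto
  then show ?thesis
    unfolding grand_orbit_def by blast
qed

lemma eventually_funpow_collatzT_in_12:
  assumes "n \<in> grand_orbit 1"
  shows "eventually (\<lambda>k. (collatzT ^^ k) n \<in> {1, 2}) sequentially"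
proof -
  have "sigma_inf n < \<infinity>"
    using assms grand_orbit_1 by blast
  then obtain k where k: "(collatzT ^^ k) n = 1"
    unfolding sigma_inf_finite_iff by blast
  show ?thesis
  proof (rule eventually_sequentiallyI)
    fix l assume "k \<le> l"
    then have "(collatzT ^^ l) n = (collatzT ^^ (l - k)) 1"
      using k by (metis funpow_collatzT_add le_add_diff_inverse2)
    then show "(collatzT ^^ l) n \<in> {1, 2}"
      using funpow_collatzT_1 by simp
  qed
qed

definition collatz_conjecture :: bool where
  "collatz_conjecture \<longleftrightarrow> (\<forall>n::nat. n \<ge> 1 \<longrightarrow> sigma_inf n < \<infinity>)"

lemma collatz_conjecture_iff_grand_orbit_1:
  "collatz_conjecture \<longleftrightarrow> (\<forall>n. n \<ge> 1 \<longrightarrow> n \<in> grand_orbit 1)"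
  unfolding collatz_conjecture_def grand_orbit_1 by simp

lemma not_collatz_conjectureE:
  assumes "\<not> collatz_conjecture"
  obtains n0 where "n0 \<ge> 1" "n0 \<notin> grand_orbit 1"
  using assms by (auto simp: collatz_conjecture_iff_grand_orbit_1)

section \<open>Power series with bounded coefficients\<close>

interpretation fs: vector_space fscale
  by unfold_locales (simp_all add: fscale_def fun_eq_iff distrib_left distrib_right)

definition disk_series :: "(nat \<Rightarrow> complex) \<Rightarrow> complex \<Rightarrow> complex" where
  "disk_series a = restrD (\<lambda>z. \<Sum>n. a n * z ^ n)"

lemma norm_indicator_le_1 [simp]: "norm (indicator A x :: complex) \<le> 1"
  by (simp add: indicator_def)

lemma Bseq_indicator: "Bseq (indicator A :: nat \<Rightarrow> complex)"
  by (rule BseqI'[of _ 1]) simp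

lemma summable_norm_power_Bseq:
  fixes a :: "nat \<Rightarrow> complex"
  assumes "Bseq a" "norm z < 1"
  shows "summable (\<lambda>n. norm (a n * z ^ n))"
proof -
  obtain B where B: "\<And>n. norm (a n) \<le> B"
    using assms(1) by (auto simp: Bseq_def)
  have geometric: "summable (\<lambda>n. B * norm z ^ n)"
    using assms(2) by (intro summable_mult summable_geometric) auto
  have "norm (norm (a n * z ^ n)) \<le> B * norm z ^ n" for n
    by (simp add: norm_mult norm_power mult_right_mono B)
  then show ?thesis
    by (intro summable_comparison_test'[OF geometric])
qed

lemma disk_series_sums:
  assumes "Bseq a" "z \<in> diskD"
  shows "(\<lambda>n. a n * z ^ n) sums disk_series a z"
  using summable_norm_cancel[OF summable_norm_power_Bseq[OF assms(1)]] assms(2)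
  by (simp add: disk_series_def restrD_def summable_sums)

lemma disk_series_outside [simp]: "z \<notin> diskD \<Longrightarrow> disk_series a z = 0"
  by (simp add: disk_series_def restrD_def)

lemma disk_series_holomorphic: "Bseq a \<Longrightarrow> disk_series a holomorphic_on diskD"
  using power_series_holomorphic[of 0 1 a "disk_series a"] disk_series_sums by simp

lemma disk_series_in_AD: "Bseq a \<Longrightarrow> disk_series a \<in> AD"
  by (simp add: AD_def disk_series_holomorphic)

lemma tcoeff_eqI:
  assumes "eventually (\<lambda>z. (\<lambda>n. a n * z ^ n) sums f z) (nhds 0)"
  shows "tcoeff f n = a n"
proof -
  have "f has_fps_expansion Abs_fps a"
    using assms by (intro has_fps_expansionI) simp
  from fps_nth_fps_expansion[OF this, of n] show ?thesis
    by (simp add: tcoeff_def)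
qed

lemma tcoeff_disk_series [simp]:
  assumes "Bseq a"
  shows "tcoeff (disk_series a) n = a n"
proof (rule tcoeff_eqI)
  show "eventually (\<lambda>z. (\<lambda>n. a n * z ^ n) sums disk_series a z) (nhds 0)"
    using eventually_nhds_in_open[of diskD 0]
    by (auto elim!: eventually_mono intro: disk_series_sums[OF assms])
qed

lemma disk_series_inject:
  assumes "Bseq a" "Bseq b"
  shows "disk_series a = disk_series b \<longleftrightarrow> a = b"
  using tcoeff_disk_series[OF assms(1)] tcoeff_disk_series[OF assms(2)] by auto

lemma disk_series_tcoeff: "h \<in> AD \<Longrightarrow> disk_series (tcoeff h) = h"
  using holomorphic_power_series[of h 0 1]
  by (auto simp: fun_eq_iff AD_def disk_series_def restrD_def tcoeff_def sums_iff)

lemma sum_fun_apply: "(\<Sum>i\<in>I. f i) x = (\<Sum>i\<in>I. f i x)"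
  by (induction I rule: infinite_finite_induct) auto

lemma disk_series_sum:
  assumes "finite I" "\<And>i. i \<in> I \<Longrightarrow> Bseq (a i)"
  shows "(\<Sum>i\<in>I. disk_series (a i)) = disk_series (\<lambda>n. \<Sum>i\<in>I. a i n)"
proof
  fix z
  show "(\<Sum>i\<in>I. disk_series (a i)) z = disk_series (\<lambda>n. \<Sum>i\<in>I. a i n) z"
  proof (cases "z \<in> diskD")
    case True
    then have "(\<lambda>n. \<Sum>i\<in>I. a i n * z ^ n) sums (\<Sum>i\<in>I. disk_series (a i) z)"
      using assms by (intro sums_sum disk_series_sums)
    then show ?thesis
      using True by (simp add: sum_fun_apply disk_series_def restrD_def sum_distrib_right sums_iff)
  qed (simp add: sum_fun_apply)
qed

lemma disk_series_add:
  assumes "Bseq a" "Bseq b"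
  shows "disk_series a + disk_series b = disk_series (\<lambda>n. a n + b n)"
  using disk_series_sum[of "{True, False}" "\<lambda>i. if i then a else b"] assms by simp

lemma fscale_disk_series:
  assumes "Bseq a"
  shows "fscale c (disk_series a) = disk_series (\<lambda>n. c * a n)"
proof
  fix z
  show "fscale c (disk_series a) z = disk_series (\<lambda>n. c * a n) z"
    using sums_mult[OF disk_series_sums[OF assms], of z c]
    by (cases "z \<in> diskD") (auto simp: fscale_def disk_series_def restrD_def sums_iff mult.assoc)
qed

lemma tcoeff_zero [simp]: "tcoeff 0 n = 0"
  by (simp add: tcoeff_def zero_fun_def)

lemma tcoeff_add:
  assumes "f \<in> AD" "g \<in> AD"
  shows "tcoeff (f + g) n = tcoeff f n + tcoeff g n"
proof -
  have "(deriv ^^ n) (\<lambda>z. f z + g z) 0 = (deriv ^^ n) f 0 + (deriv ^^ n) g 0"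
    using assms by (intro higher_deriv_add) (auto simp: AD_def)
  then show ?thesis
    by (simp add: tcoeff_def plus_fun_def add_divide_distrib)
qed

lemma tcoeff_fscale:
  assumes "f \<in> AD"
  shows "tcoeff (fscale c f) n = c * tcoeff f n"
proof -
  have "(deriv ^^ n) (\<lambda>z. c * f z) 0 = c * (deriv ^^ n) f 0"
    using assms by (intro higher_deriv_cmult) (auto simp: AD_def)
  then show ?thesis
    by (simp add: tcoeff_def fscale_def)
qed

lemma AD_add: "f \<in> AD \<Longrightarrow> g \<in> AD \<Longrightarrow> f + g \<in> AD"
  by (simp add: AD_def plus_fun_def holomorphic_on_add)

lemma AD_fscale: "f \<in> AD \<Longrightarrow> fscale c f \<in> AD"
  by (simp add: AD_def fscale_def holomorphic_on_mult)

lemma subspace_AD_tcoeff_eq_0: "fs.subspace {h \<in> AD. tcoeff h n = 0}"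
proof -
  have "(0 :: complex \<Rightarrow> complex) \<in> AD"
    by (simp add: AD_def zero_fun_def)
  then show ?thesis
    unfolding fs.subspace_def by (simp add: AD_add AD_fscale tcoeff_add tcoeff_fscale)
qed

lemma (in vector_space) card_extension_eq_dim:
  assumes "B \<subseteq> V" "independent B"
  obtains C where "B \<subseteq> C" "card C = dim V"
proof -
  obtain C where "B \<subseteq> C" "C \<subseteq> V" "independent C" "V \<subseteq> span C"
    using maximal_independent_subset_extend[OF assms] .
  then show ?thesis
    using that basis_card_eq_dim by blast
qed

lemma independent_disk_series_indicator:
  assumes "finite \<A>" "disjoint \<A>" "{} \<notin> \<A>"
  shows "fs.independent ((\<lambda>A. disk_series (indicator A)) ` \<A>)"
  using assms
proof (induction rule: finite_induct)
  case (insert A \<A>)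
  obtain n where "n \<in> A"
    using insert.prems(2) by blast
  then have "n \<notin> B" if "B \<in> \<A>" for B
    using insert.hyps(2) insert.prems(1) that by (auto simp: disjoint_def)
  then have "(\<lambda>A. disk_series (indicator A)) ` \<A> \<subseteq> {h \<in> AD. tcoeff h n = 0}"
    by (auto simp: disk_series_in_AD Bseq_indicator)
  then have "fs.span ((\<lambda>A. disk_series (indicator A)) ` \<A>) \<subseteq> {h \<in> AD. tcoeff h n = 0}"
    by (rule fs.span_minimal[OF _ subspace_AD_tcoeff_eq_0])
  moreover have "tcoeff (disk_series (indicator A)) n \<noteq> 0"
    using \<open>n \<in> A\<close> by (simp add: Bseq_indicator)
  ultimately have "disk_series (indicator A) \<notin> fs.span ((\<lambda>A. disk_series (indicator A)) ` \<A>)"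
    by blast
  moreover have "disjoint \<A>"
    using insert.prems(1) by (rule pairwise_subset) auto
  ultimately show ?case
    using insert by (simp add: fs.independent_insertI)
qed (simp add: fs.independent_empty)

lemma inj_disk_series_indicator: "inj (\<lambda>A. disk_series (indicator A :: nat \<Rightarrow> complex))"
proof (rule injI)
  fix A B :: "nat set"
  assume "disk_series (indicator A) = disk_series (indicator B)"
  then have "indicator A = (indicator B :: nat \<Rightarrow> complex)"
    by (simp add: disk_series_inject Bseq_indicator)
  then show "A = B"
    by (auto simp: fun_eq_iff indicator_def of_bool_eq_iff)
qed

section \<open>The operator acts on Taylor coefficients\<close>

lemma sums_even_odd:
  fixes f :: "nat \<Rightarrow> 'a::banach"
  assumes "summable (\<lambda>n. norm (f n))"
  shows "f sums ((\<Sum>n. f (2 * n)) + (\<Sum>n. f (2 * n + 1)))"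
proof -
  have reindexed: "summable (\<lambda>n. f (g n))" if "inj g" for g :: "nat \<Rightarrow> nat"
  proof -
    have "summable ((\<lambda>n. norm (f n)) \<circ> g)"
      by (rule summable_reindex[OF assms that]) simp
    then have "summable (\<lambda>n. norm (f (g n)))"
      by (simp add: o_def)
    then show ?thesis
      by (rule summable_norm_cancel)
  qed
  have "inj (\<lambda>n::nat. 2 * n)" "inj (\<lambda>n::nat. 2 * n + 1)"
    by (simp_all add: inj_on_def)
  then have split: "(\<lambda>n. f (2 * n) + f (2 * n + 1)) sums ((\<Sum>n. f (2 * n)) + (\<Sum>n. f (2 * n + 1)))"
    by (intro sums_add summable_sums reindexed)
  have "(\<lambda>n. sum f {n * 2..<n * 2 + 2}) sums (\<Sum>n. f n)"
    using summable_norm_cancel[OF assms] by (intro sums_group summable_sums) simp_all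
  moreover have "(\<lambda>n. sum f {n * 2..<n * 2 + 2}) = (\<lambda>n. f (2 * n) + f (2 * n + 1))"
    by (simp add: numeral_2_eq_2 mult.commute)
  ultimately have "(\<Sum>n. f n) = (\<Sum>n. f (2 * n)) + (\<Sum>n. f (2 * n + 1))"
    using sums_unique2[OF _ split] by simp
  with summable_norm_cancel[OF assms] show ?thesis
    by (metis summable_sums)
qed

lemma collatz_series_sums:
  fixes a :: "nat \<Rightarrow> complex" and z :: complex
  assumes "summable (\<lambda>m. norm (a (collatzT m) * z ^ m))"
  shows "(\<lambda>m. a (collatzT m) * z ^ m) sums
           ((\<Sum>n. a n * z ^ (2 * n)) + (\<Sum>k. a (3 * k + 2) * z ^ (2 * k + 1)))"
  using sums_even_odd[OF assms] by simp

lemma opF_disk_series: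
  assumes "Bseq a"
  shows "opF (disk_series a) = disk_series (\<lambda>n. a (collatzT n))"
proof
  fix z
  show "opF (disk_series a) z = disk_series (\<lambda>n. a (collatzT n)) z"
  proof (cases "z \<in> diskD")
    case True
    have "Bseq (\<lambda>n. a (collatzT n))"
      using assms by (rule Bseq_subseq)
    with True show ?thesis
      using collatz_series_sums[OF summable_norm_power_Bseq] disk_series_sums
      by (simp add: opF_def restrD_def assms sums_iff)
  qed (simp add: opF_def restrD_def)
qed

lemma funpow_opF_disk_series:
  assumes "Bseq a"
  shows "(opF ^^ m) (disk_series a) = disk_series (\<lambda>n. a ((collatzT ^^ m) n))"
proof (induction m)
  case (Suc m)
  have "Bseq (\<lambda>n. a ((collatzT ^^ m) n))"
    using assms by (rule Bseq_subseq)
  then show ?case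
    using Suc by (simp add: opF_disk_series funpow_swap1)
qed simp

lemma AD_tcoeff_Bseq:
  fixes r :: real
  assumes "h \<in> AD" "0 < r" "r < 1"
  shows "Bseq (\<lambda>n. tcoeff h n * r ^ n)"
proof -
  have "(\<lambda>n. tcoeff h n * of_real r ^ n) sums h (of_real r)"
    using holomorphic_power_series[of h 0 1 "of_real r"] assms by (simp add: AD_def tcoeff_def)
  then have "(\<lambda>n. tcoeff h n * of_real r ^ n) \<longlonglongrightarrow> 0"
    using summable_LIMSEQ_zero sums_summable by blast
  then show ?thesis
    by (intro convergent_imp_Bseq convergentI) simp
qed

(* Only a neighbourhood of 0 is needed: the coefficients of h grow at most like 2^n and
   collatzT n <= 2 n, so the rearranged series converges absolutely for |z| < 1/4. *)

lemma tcoeff_opF: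
  assumes "h \<in> AD"
  shows "tcoeff (opF h) n = tcoeff h (collatzT n)"
proof (rule tcoeff_eqI)
  obtain K where K: "\<And>n. norm (tcoeff h n * (1/2) ^ n) \<le> K"
    using AD_tcoeff_Bseq[OF assms, of "1/2"] by (auto simp: Bseq_def)
  have coeff_bound: "norm (tcoeff h n) \<le> K * 2 ^ n" for n
    using K[of n] by (simp add: norm_mult norm_power norm_divide power_one_over divide_le_eq)
  have "K \<ge> 0"
    using K[of 0] by (meson norm_ge_zero order_trans)
  have "(\<lambda>m. tcoeff h (collatzT m) * z ^ m) sums opF h z" if "z \<in> ball 0 (1/8)" for z
  proof -
    have bound: "norm (norm (tcoeff h (collatzT m) * z ^ m)) \<le> K * (4 * norm z) ^ m" for m
    proof -
      have "(2::real) ^ collatzT m \<le> 2 ^ (2 * m)"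
        by (rule power_increasing[OF collatzT_le]) simp
      then have "norm (tcoeff h (collatzT m)) \<le> K * 2 ^ (2 * m)"
        using coeff_bound[of "collatzT m"] mult_left_mono[OF _ \<open>K \<ge> 0\<close>]
        by (meson order_trans)
      then have "norm (tcoeff h (collatzT m)) * norm z ^ m \<le> K * 4 ^ m * norm z ^ m"
        by (simp add: power_mult mult_right_mono)
      then show ?thesis
        by (simp add: norm_mult norm_power power_mult_distrib mult.assoc)
    qed
    have geometric: "summable (\<lambda>m. K * (4 * norm z) ^ m)"
      using that by (intro summable_mult summable_geometric) auto
    have "summable (\<lambda>m. norm (tcoeff h (collatzT m) * z ^ m))"
      using bound by (rule summable_comparison_test'[OF geometric])
    then show ?thesis
      using collatz_series_sums that by (simp add: opF_def restrD_def)
  qed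
  then show "eventually (\<lambda>z. (\<lambda>m. tcoeff h (collatzT m) * z ^ m) sums opF h z) (nhds 0)"
    using eventually_nhds_in_open[of "ball 0 (1/8)" 0] by (auto elim!: eventually_mono)
qed

section \<open>Taylor coefficients under locally uniform convergence\<close>

lemma norm_tcoeff_diff_le:
  assumes "f holomorphic_on diskD" "g holomorphic_on diskD" "0 < r" "r < 1"
    and "\<And>z. norm z = r \<Longrightarrow> norm (f z - g z) \<le> e"
  shows "norm (tcoeff f n - tcoeff g n) \<le> e / r ^ n"
proof -
  have holo: "(\<lambda>z. f z - g z) holomorphic_on diskD"
    using assms(1,2) by (rule holomorphic_on_diff)
  have "cball 0 r \<subseteq> diskD"
    using assms(4) by auto
  then have "norm ((deriv ^^ n) (\<lambda>z. f z - g z) 0) \<le> fact n * e / r ^ n"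
    using assms(3,5)
    by (intro Cauchy_inequality holomorphic_on_subset[OF holo] continuous_on_subset[OF
          holomorphic_on_imp_continuous_on[OF holo]]) auto
  moreover have "(deriv ^^ n) (\<lambda>z. f z - g z) 0 = (deriv ^^ n) f 0 - (deriv ^^ n) g 0"
    using assms(1,2) by (intro higher_deriv_diff) auto
  ultimately show ?thesis
    by (simp add: tcoeff_def diff_divide_distrib[symmetric] norm_divide divide_le_eq field_simps)
qed

lemma tendsto_tcoeff_uniform_limit:
  assumes "\<And>m. f m holomorphic_on diskD" "g holomorphic_on diskD" "0 < r" "r < 1"
    and "uniform_limit (sphere 0 r) f g sequentially"
  shows "(\<lambda>m. tcoeff (f m) n) \<longlonglongrightarrow> tcoeff g n"
proof (rule tendstoI)
  fix e :: real
  assume "e > 0"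
  then have "eventually (\<lambda>m. \<forall>z\<in>sphere 0 r. dist (f m z) (g z) < e * r ^ n / 2) sequentially"
    using assms(3,5) by (intro uniform_limitD) auto
  then show "eventually (\<lambda>m. dist (tcoeff (f m) n) (tcoeff g n) < e) sequentially"
  proof eventually_elim
    case (elim m)
    have "norm (tcoeff (f m) n - tcoeff g n) \<le> (e * r ^ n / 2) / r ^ n"
      using elim assms(1-4) by (intro norm_tcoeff_diff_le) (auto simp: dist_norm less_imp_le)
    also have "\<dots> < e"
      using \<open>e > 0\<close> assms(3) by simp
    finally show ?case
      by (simp add: dist_norm)
  qed
qed

lemma tcoeff_AD_closure_eq_0:
  assumes "f \<in> AD_closure S" "S \<subseteq> {g \<in> AD. tcoeff g n = 0}"
  shows "tcoeff f n = 0"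
proof -
  have "f \<in> AD"
    using assms(1) by (simp add: AD_closure_def)
  have "norm (tcoeff f n) \<le> 0 + e" if "e > 0" for e
  proof -
    have "compact (sphere (0::complex) (1/2))" "sphere (0::complex) (1/2) \<subseteq> diskD"
      by auto
    moreover have "e / 2 ^ n > 0"
      using that by simp
    ultimately obtain g where "g \<in> S" and close: "\<forall>z\<in>sphere 0 (1/2). cmod (f z - g z) < e / 2 ^ n"
      using assms(1) unfolding AD_closure_def by blast
    then have "norm (tcoeff f n - tcoeff g n) \<le> (e / 2 ^ n) / (1/2) ^ n"
      using assms(2) \<open>f \<in> AD\<close>
      by (intro norm_tcoeff_diff_le) (auto simp: AD_def less_imp_le)
    then show ?thesis
      using \<open>g \<in> S\<close> assms(2) by (auto simp: power_one_over)
  qed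
  then have "norm (tcoeff f n) \<le> 0"
    by (rule field_le_epsilon)
  then show ?thesis
    by simp
qed

lemma compact_subset_disk:
  assumes "compact K" "K \<subseteq> diskD"
  obtains r where "0 \<le> r" "r < 1" "K \<subseteq> cball 0 r"
proof (cases "K = {}")
  case False
  have "compact (norm ` K)"
    by (rule compact_continuous_image[OF continuous_on_norm_id assms(1)])
  then obtain x where "x \<in> K" "\<forall>y\<in>K. norm y \<le> norm x"
    using compact_attains_sup[of "norm ` K"] False by auto
  with assms(2) show ?thesis
    by (intro that[of "norm x"]) auto
qed (use that[of 0] in auto)

lemma norm_disk_series_diff_le:
  assumes "\<And>n. norm (a n) \<le> B" "\<And>n. norm (b n) \<le> B" "\<And>n. n < N \<Longrightarrow> a n = b n"
    and "norm z \<le> r" "r < 1"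
  shows "norm (disk_series a z - disk_series b z) \<le> 2 * B * r ^ N / (1 - r)"
proof -
  have "z \<in> diskD"
    using assms(4,5) by simp
  then have "(\<lambda>n. a n * z ^ n - b n * z ^ n) sums (disk_series a z - disk_series b z)"
    using assms(1,2) by (intro sums_diff disk_series_sums BseqI')
  then have series: "(\<lambda>n. (a n - b n) * z ^ n) sums (disk_series a z - disk_series b z)"
    by (simp add: left_diff_distrib)
  define g where "g n = (if n < N then 0 else 2 * B * r ^ n)" for n
  have "0 \<le> r"
    using assms(4) norm_ge_zero[of z] by linarith
  then have "(\<lambda>i. 2 * B * r ^ N * r ^ i) sums (2 * B * r ^ N * (1 / (1 - r)))"
    using assms(5) by (intro sums_mult geometric_sums) auto
  then have "(\<lambda>i. g (i + N)) sums (2 * B * r ^ N / (1 - r))"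
    by (simp add: g_def power_add mult_ac)
  then have "g sums (2 * B * r ^ N / (1 - r) + (\<Sum>i<N. g i))"
    by (simp only: sums_iff_shift)
  then have tail: "g sums (2 * B * r ^ N / (1 - r))"
    by (simp add: g_def)
  have bound: "norm ((a n - b n) * z ^ n) \<le> g n" for n
  proof (cases "n < N")
    case False
    have "norm (a n - b n) \<le> 2 * B"
      using norm_triangle_ineq4[of "a n" "b n"] assms(1,2)[of n] by simp
    moreover have "norm z ^ n \<le> r ^ n"
      using assms(4) by (intro power_mono) auto
    moreover have "0 \<le> B"
      using assms(1)[of 0] norm_ge_zero order_trans by blast
    ultimately have "norm (a n - b n) * norm z ^ n \<le> 2 * B * r ^ n"
      by (intro mult_mono) auto
    then show ?thesis
      using False by (simp add: g_def norm_mult norm_power)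
  qed (simp add: g_def assms(3))
  have "norm (\<Sum>n. (a n - b n) * z ^ n) \<le> (\<Sum>n. g n)"
    using bound tail by (intro norm_suminf_le) (auto simp: sums_iff)
  with series tail show ?thesis
    by (simp add: sums_iff)
qed

lemma uniform_limit_disk_series:
  assumes "\<And>m n. norm (a m n) \<le> B" "\<And>n. norm (b n) \<le> B"
    and "\<And>n. eventually (\<lambda>m. a m n = b n) sequentially"
    and "compact K" "K \<subseteq> diskD"
  shows "uniform_limit K (\<lambda>m. disk_series (a m)) (disk_series b) sequentially"
proof (rule uniform_limitI)
  fix e :: real
  assume "e > 0"
  obtain r where r: "0 \<le> r" "r < 1" "K \<subseteq> cball 0 r"
    using compact_subset_disk[OF assms(4,5)] .
  have "(\<lambda>N. 2 * B * r ^ N / (1 - r)) \<longlonglongrightarrow> 2 * B * 0 / (1 - r)"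
    using r by (intro tendsto_intros LIMSEQ_power_zero) auto
  then have "eventually (\<lambda>N. 2 * B * r ^ N / (1 - r) < e) sequentially"
    using \<open>e > 0\<close> by (intro order_tendstoD(2)) auto
  then obtain N where N: "2 * B * r ^ N / (1 - r) < e"
    by (meson eventually_sequentially order_refl)
  have "eventually (\<lambda>m. \<forall>n\<in>{..<N}. a m n = b n) sequentially"
    using assms(3) by (intro eventually_ball_finite) auto
  then show "eventually (\<lambda>m. \<forall>z\<in>K. dist (disk_series (a m) z) (disk_series b z) < e) sequentially"
  proof eventually_elim
    case (elim m)
    show ?case
    proof
      fix z
      assume "z \<in> K"
      then have "norm (disk_series (a m) z - disk_series b z) \<le> 2 * B * r ^ N / (1 - r)"
        using elim r assms(1,2) by (intro norm_disk_series_diff_le) auto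
      with N show "dist (disk_series (a m) z) (disk_series b z) < e"
        by (simp add: dist_norm)
    qed
  qed
qed

section \<open>Fixed points of the operator\<close>

definition orbit_series :: "nat \<Rightarrow> complex \<Rightarrow> complex" where
  "orbit_series m = disk_series (indicator (grand_orbit m))"

lemma opF_orbit_series: "opF (orbit_series m) = orbit_series m"
proof -
  have "(\<lambda>n. indicator (grand_orbit m) (collatzT n)) = (indicator (grand_orbit m) :: nat \<Rightarrow> complex)"
    by (simp add: fun_eq_iff indicator_def)
  then show ?thesis
    by (simp add: orbit_series_def opF_disk_series Bseq_indicator)
qed

lemma orbit_series_fixed_point: "orbit_series m \<in> {h \<in> AD. opF h = h}"
  using opF_orbit_series[of m] disk_series_in_AD[OF Bseq_indicator] by (simp add: orbit_series_def)

lemma tcoeff_fixed_point_grand_orbit: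
  assumes "h \<in> AD" "opF h = h" "n \<in> grand_orbit m"
  shows "tcoeff h n = tcoeff h m"
proof -
  have invariant: "tcoeff h ((collatzT ^^ i) k) = tcoeff h k" for i k
    using tcoeff_opF[OF assms(1)] assms(2) by (induction i) simp_all
  obtain i j where "(collatzT ^^ i) n = (collatzT ^^ j) m"
    using assms(3) by (auto simp: grand_orbit_def)
  then show ?thesis
    using invariant[of i n] invariant[of j m] by simp
qed

lemma independent_orbit_series:
  assumes "finite M" "inj_on grand_orbit M"
  shows "fs.independent (orbit_series ` M)" "card (orbit_series ` M) = card M"
proof -
  have image: "orbit_series ` M = (\<lambda>A. disk_series (indicator A)) ` grand_orbit ` M"
    by (auto simp: orbit_series_def)
  have "disjoint (grand_orbit ` M)"
    using disjoint_grand_orbits by (rule pairwise_subset) auto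
  moreover have "{} \<notin> grand_orbit ` M"
    using self_in_grand_orbit by blast
  ultimately show "fs.independent (orbit_series ` M)"
    unfolding image using assms(1) by (intro independent_disk_series_indicator) auto
  show "card (orbit_series ` M) = card M"
    unfolding image using assms(2) inj_disk_series_indicator
    by (simp add: card_image inj_on_subset)
qed

lemma fixed_point_eq_orbit_series:
  assumes collatz_conjecture "h \<in> AD" "opF h = h"
  shows "h = fscale (tcoeff h 0) (orbit_series 0) + fscale (tcoeff h 1) (orbit_series 1)"
proof -
  have "0 \<notin> grand_orbit 1"
    using grand_orbit_0_neq[of 1] grand_orbit_eq_iff by auto
  have coeffs: "tcoeff h n = tcoeff h 0 * indicator (grand_orbit 0) n
                            + tcoeff h 1 * indicator (grand_orbit 1) n" for n
  proof (cases "n = 0")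
    case False
    then have "n \<in> grand_orbit 1"
      using assms(1) by (simp add: collatz_conjecture_iff_grand_orbit_1)
    with False show ?thesis
      using assms(2,3) tcoeff_fixed_point_grand_orbit[of h n 1] by (simp add: grand_orbit_0)
  qed (use \<open>0 \<notin> grand_orbit 1\<close> in \<open>simp add: grand_orbit_0\<close>)
  have "h = disk_series (tcoeff h)"
    using assms(2) by (simp add: disk_series_tcoeff)
  also have "\<dots> = disk_series (\<lambda>n. tcoeff h 0 * indicator (grand_orbit 0) n
                                  + tcoeff h 1 * indicator (grand_orbit 1) n)"
    by (rule arg_cong[where f = disk_series]) (rule ext, rule coeffs)
  also have "\<dots> = fscale (tcoeff h 0) (orbit_series 0) + fscale (tcoeff h 1) (orbit_series 1)"
    by (simp add: orbit_series_def fscale_disk_series disk_series_add Bseq_indicator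
        Bseq_mult[OF Bfun_const Bseq_indicator])
  finally show ?thesis .
qed

lemma dim_fixed_points_eq_2:
  assumes collatz_conjecture
  shows "fs.dim {h \<in> AD. opF h = h} = 2"
proof (rule fs.dim_unique)
  have "inj_on grand_orbit {0, 1}"
    using grand_orbit_0_neq[of 1] by simp
  from independent_orbit_series[OF _ this]
  show "fs.independent (orbit_series ` {0, 1})" "card (orbit_series ` {0, 1}) = 2"
    by simp_all
  show "orbit_series ` {0, 1} \<subseteq> {h \<in> AD. opF h = h}"
    using orbit_series_fixed_point by blast
  show "{h \<in> AD. opF h = h} \<subseteq> fs.span (orbit_series ` {0, 1})"
  proof
    fix h
    assume "h \<in> {h \<in> AD. opF h = h}"
    then have "h = fscale (tcoeff h 0) (orbit_series 0) + fscale (tcoeff h 1) (orbit_series 1)"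
      using fixed_point_eq_orbit_series[OF assms] by blast
    also have "\<dots> \<in> fs.span (orbit_series ` {0, 1})"
      by (intro fs.span_add fs.span_scale fs.span_base) auto
    finally show "h \<in> fs.span (orbit_series ` {0, 1})" .
  qed
qed

lemma dim_fixed_points_ne_2:
  assumes "\<not> collatz_conjecture"
  shows "fs.dim {h \<in> AD. opF h = h} \<noteq> 2"
proof
  assume dim: "fs.dim {h \<in> AD. opF h = h} = 2"
  obtain n0 where "n0 \<ge> 1" "n0 \<notin> grand_orbit 1"
    using not_collatz_conjectureE[OF assms] .
  then have "grand_orbit 0 \<noteq> grand_orbit 1" "grand_orbit 0 \<noteq> grand_orbit n0"
    "grand_orbit n0 \<noteq> grand_orbit 1"
    using grand_orbit_0_neq[of 1] grand_orbit_0_neq[of n0] grand_orbit_eq_iff[of n0 1] by auto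
  then have orbits: "inj_on grand_orbit {0, 1, n0}"
    by (auto simp: inj_on_insert)
  have fixed: "orbit_series ` {0, 1, n0} \<subseteq> {h \<in> AD. opF h = h}"
    using orbit_series_fixed_point by blast
  have independent: "fs.independent (orbit_series ` {0, 1, n0})"
    using independent_orbit_series(1)[OF _ orbits] by simp
  obtain C where C: "orbit_series ` {0, 1, n0} \<subseteq> C" "card C = 2"
    by (rule fs.card_extension_eq_dim[OF fixed independent]) (simp add: dim)
  have "finite C"
    using C(2) by (intro card_ge_0_finite) simp
  with C have "card (orbit_series ` {0, 1, n0}) \<le> 2"
    by (metis card_mono)
  moreover have "card (orbit_series ` {0, 1, n0}) = 3"
  proof -
    have "n0 \<noteq> 1"
      using \<open>n0 \<notin> grand_orbit 1\<close> self_in_grand_orbit by blast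
    then show ?thesis
      using independent_orbit_series(2)[OF _ orbits] \<open>n0 \<ge> 1\<close> by simp
  qed
  ultimately show False
    by simp
qed

lemma collatz_conjecture_iff_dim_fixed_points:
  "collatz_conjecture \<longleftrightarrow> fs.dim {h \<in> AD. opF h = h} = 2"
  using dim_fixed_points_eq_2 dim_fixed_points_ne_2 by blast

section \<open>Approximations of z/(1-z)\<close>

lemma disk_series_indicator_ge_1: "disk_series (indicator {1..}) = restrD (\<lambda>z. z / (1 - z))"
proof
  fix z :: complex
  show "disk_series (indicator {1..}) z = restrD (\<lambda>z. z / (1 - z)) z"
  proof (cases "z \<in> diskD")
    case True
    then have "(\<lambda>n. z * z ^ n) sums (z * (1 / (1 - z)))"
      by (intro sums_mult geometric_sums) simp
    then have "(\<lambda>n. indicator {1..} (Suc n) * z ^ Suc n) sums (z / (1 - z))"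
      by simp
    then have "(\<lambda>n. indicator {1..} n * z ^ n) sums (z / (1 - z))"
      by (subst (asm) sums_Suc_iff) simp
    with True show ?thesis
      by (simp add: disk_series_def restrD_def sums_iff)
  qed (simp add: restrD_def)
qed

lemma Pol_eq_disk_series: "Pol k = disk_series (indicator {n. 1 \<le> n \<and> sigma_inf n = enat k})"
proof -
  have "(\<lambda>n. if n \<ge> 1 \<and> sigma_inf n = enat k then z ^ n else 0)
          = (\<lambda>n. indicator {n. 1 \<le> n \<and> sigma_inf n = enat k} n * z ^ n)" for z :: complex
    by (auto simp: indicator_def)
  then show ?thesis
    by (simp add: Pol_def disk_series_def)
qed

lemma sum_Pol: "(\<Sum>k<N. Pol k) = disk_series (indicator {n. 1 \<le> n \<and> sigma_inf n < enat N})"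
proof -
  have "(\<Sum>k<N. indicator {n. 1 \<le> n \<and> sigma_inf n = enat k} n) =
        (indicator {n. 1 \<le> n \<and> sigma_inf n < enat N} n :: complex)" for n
    by (cases "sigma_inf n") (auto simp: indicator_def of_bool_def)
  then show ?thesis
    by (simp add: Pol_eq_disk_series disk_series_sum Bseq_indicator)
qed

lemma uniform_limit_sum_Pol:
  assumes collatz_conjecture "compact K" "K \<subseteq> diskD"
  shows "uniform_limit K (\<lambda>N. \<Sum>k<N. Pol k) (disk_series (indicator {1..})) sequentially"
proof -
  have partial_sums_agree:
    "eventually (\<lambda>N. indicator {n. 1 \<le> n \<and> sigma_inf n < enat N} n = (indicator {1..} n :: complex))
       sequentially" for n
  proof (cases "n = 0")
    case False
    then have "1 \<le> n"
      by simp
    with assms(1) have "sigma_inf n < \<infinity>"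
      unfolding collatz_conjecture_def by blast
    then obtain j where "sigma_inf n = enat j"
      by (rule less_infinityE)
    show ?thesis
    proof (rule eventually_sequentiallyI[of "Suc j"])
      fix N
      assume "Suc j \<le> N"
      with False \<open>sigma_inf n = enat j\<close> show
        "indicator {n. 1 \<le> n \<and> sigma_inf n < enat N} n = (indicator {1..} n :: complex)"
        by (simp add: indicator_def)
    qed
  qed (simp add: indicator_def)
  show ?thesis
    unfolding sum_Pol using assms(2,3)
    by (intro uniform_limit_disk_series[where B = 1, OF _ _ partial_sums_agree]) simp_all
qed

lemma geometric_in_Zspace:
  assumes collatz_conjecture
  shows "restrD (\<lambda>z. z / (1 - z)) \<in> Zspace"
  unfolding Zspace_def AD_closure_def disk_series_indicator_ge_1[symmetric]
proof (intro CollectI conjI allI impI)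
  show "disk_series (indicator {1..}) \<in> AD"
    by (simp add: disk_series_in_AD Bseq_indicator)
  fix K :: "complex set" and e :: real
  assume "compact K \<and> K \<subseteq> diskD" and "e > 0"
  then have "eventually (\<lambda>N. \<forall>z\<in>K. dist ((\<Sum>k<N. Pol k) z) (disk_series (indicator {1..}) z) < e)
               sequentially"
    using uniform_limit_sum_Pol[OF assms] uniform_limitD by blast
  then obtain N where N: "\<forall>z\<in>K. dist ((\<Sum>k<N. Pol k) z) (disk_series (indicator {1..}) z) < e"
    using eventually_happens' sequentially_bot by blast
  show "\<exists>g\<in>fs.span (range Pol). \<forall>z\<in>K. cmod (disk_series (indicator {1..}) z - g z) < e"
  proof
    show "(\<Sum>k<N. Pol k) \<in> fs.span (range Pol)"
      by (rule fs.span_sum) (simp add: fs.span_base)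
    show "\<forall>z\<in>K. cmod (disk_series (indicator {1..}) z - (\<Sum>k<N. Pol k) z) < e"
      using N by (simp add: dist_norm norm_minus_commute)
  qed
qed

lemma geometric_notin_Zspace:
  assumes "\<not> collatz_conjecture"
  shows "restrD (\<lambda>z. z / (1 - z)) \<notin> Zspace"
proof
  assume "restrD (\<lambda>z. z / (1 - z)) \<in> Zspace"
  obtain n0 where "n0 \<ge> 1" "n0 \<notin> grand_orbit 1"
    using not_collatz_conjectureE[OF assms] .
  then have "sigma_inf n0 = \<infinity>"
    unfolding grand_orbit_1 by simp
  then have "range Pol \<subseteq> {h \<in> AD. tcoeff h n0 = 0}"
    by (auto simp: Pol_eq_disk_series disk_series_in_AD Bseq_indicator)
  then have "fs.span (range Pol) \<subseteq> {h \<in> AD. tcoeff h n0 = 0}"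
    by (rule fs.span_minimal[OF _ subspace_AD_tcoeff_eq_0])
  moreover have "disk_series (indicator {1..}) \<in> AD_closure (fs.span (range Pol))"
    using \<open>restrD (\<lambda>z. z / (1 - z)) \<in> Zspace\<close>
    unfolding Zspace_def disk_series_indicator_ge_1 .
  ultimately have "tcoeff (disk_series (indicator {1..})) n0 = 0"
    by (intro tcoeff_AD_closure_eq_0)
  with \<open>n0 \<ge> 1\<close> show False
    by (simp add: Bseq_indicator)
qed

lemma collatz_conjecture_iff_geometric_in_Zspace:
  "collatz_conjecture \<longleftrightarrow> restrD (\<lambda>z. z / (1 - z)) \<in> Zspace"
  using geometric_in_Zspace geometric_notin_Zspace by blast

lemma disk_series_indicator_12: "disk_series (indicator {1, 2}) = restrD (\<lambda>z. z + z ^ 2)"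
proof
  fix z :: complex
  have "(\<lambda>n. indicator {1, 2} n * z ^ n) sums (\<Sum>n\<in>{1, 2}. indicator {1, 2} n * z ^ n)"
    by (rule sums_finite) auto
  then show "disk_series (indicator {1, 2}) z = restrD (\<lambda>z. z + z ^ 2) z"
    by (simp add: disk_series_def restrD_def sums_iff)
qed

lemma funpow_opF_z_plus_z2:
  "(opF ^^ m) (restrD (\<lambda>z. z + z ^ 2)) = disk_series (\<lambda>n. indicator {1, 2} ((collatzT ^^ m) n))"
  by (simp add: disk_series_indicator_12[symmetric] funpow_opF_disk_series Bseq_indicator)

lemma uniform_limit_iterates:
  assumes collatz_conjecture "compact K" "K \<subseteq> diskD"
  shows "uniform_limit K (\<lambda>m. (opF ^^ m) (restrD (\<lambda>z. z + z ^ 2))) (\<lambda>z. z / (1 - z)) sequentially"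
proof -
  have iterates_agree:
    "eventually (\<lambda>m. indicator {1, 2} ((collatzT ^^ m) n) = (indicator {1..} n :: complex))
       sequentially" for n
  proof (cases "n = 0")
    case False
    then have "n \<in> grand_orbit 1"
      using assms(1) by (simp add: collatz_conjecture_iff_grand_orbit_1)
    then have "eventually (\<lambda>m. (collatzT ^^ m) n \<in> {1, 2}) sequentially"
      by (rule eventually_funpow_collatzT_in_12)
    then show ?thesis
      by eventually_elim (use False in \<open>simp add: indicator_def\<close>)
  qed (simp add: indicator_def)
  have "uniform_limit K (\<lambda>m. (opF ^^ m) (restrD (\<lambda>z. z + z ^ 2)))
          (disk_series (indicator {1..})) sequentially"
    unfolding funpow_opF_z_plus_z2 using assms(2,3)
    by (intro uniform_limit_disk_series[where B = 1, OF _ _ iterates_agree]) simp_all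
  moreover have "disk_series (indicator {1..}) z = z / (1 - z)" if "z \<in> K" for z
    unfolding disk_series_indicator_ge_1 using that assms(3) by (auto simp: restrD_def)
  ultimately show ?thesis
    by (subst (asm) uniform_limit_cong'[where g = "\<lambda>m. (opF ^^ m) (restrD (\<lambda>z. z + z ^ 2))"]) auto
qed

lemma not_uniform_limit_iterates:
  assumes "\<not> collatz_conjecture"
  shows "\<not> uniform_limit (sphere 0 (1/2)) (\<lambda>m. (opF ^^ m) (restrD (\<lambda>z. z + z ^ 2)))
            (\<lambda>z. z / (1 - z)) sequentially"
proof
  assume "uniform_limit (sphere 0 (1/2)) (\<lambda>m. (opF ^^ m) (restrD (\<lambda>z. z + z ^ 2)))
            (\<lambda>z. z / (1 - z)) sequentially"
  then have lim: "uniform_limit (sphere 0 (1/2)) (\<lambda>m. (opF ^^ m) (restrD (\<lambda>z. z + z ^ 2)))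
                    (disk_series (indicator {1..})) sequentially"
    unfolding disk_series_indicator_ge_1
    by (subst (asm) uniform_limit_cong'[where g = "\<lambda>m. (opF ^^ m) (restrD (\<lambda>z. z + z ^ 2))"])
      (auto simp: restrD_def)
  obtain n0 where "n0 \<ge> 1" "n0 \<notin> grand_orbit 1"
    using not_collatz_conjectureE[OF assms] .
  have "(\<lambda>m. tcoeff ((opF ^^ m) (restrD (\<lambda>z. z + z ^ 2))) n0)
          \<longlonglongrightarrow> tcoeff (disk_series (indicator {1..})) n0"
    using lim unfolding funpow_opF_z_plus_z2
    by (intro tendsto_tcoeff_uniform_limit[where r = "1/2"] disk_series_holomorphic Bseq_indicator
        Bseq_subseq[OF Bseq_indicator]) auto
  moreover have "tcoeff ((opF ^^ m) (restrD (\<lambda>z. z + z ^ 2))) n0 = 0" for m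
  proof -
    have "(collatzT ^^ m) n0 \<notin> {1, 2}"
      using in_grand_orbit_1I \<open>n0 \<notin> grand_orbit 1\<close> by blast
    then show ?thesis
      by (simp add: funpow_opF_z_plus_z2 Bseq_subseq[OF Bseq_indicator])
  qed
  moreover have "tcoeff (disk_series (indicator {1..})) n0 = 1"
    using \<open>n0 \<ge> 1\<close> by (simp add: Bseq_indicator)
  ultimately have "(\<lambda>m. 0) \<longlonglongrightarrow> (1 :: complex)"
    by simp
  then show False
    using LIMSEQ_unique[OF tendsto_const] by fastforce
qed

lemma collatz_conjecture_iff_uniform_limit_iterates:
  "collatz_conjecture \<longleftrightarrow> (\<forall>K. compact K \<and> K \<subseteq> diskD \<longrightarrow>
     uniform_limit K (\<lambda>m. (opF ^^ m) (restrD (\<lambda>z. z + z ^ 2))) (\<lambda>z. z / (1 - z)) sequentially)"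
proof
  show "\<forall>K. compact K \<and> K \<subseteq> diskD \<longrightarrow>
     uniform_limit K (\<lambda>m. (opF ^^ m) (restrD (\<lambda>z. z + z ^ 2))) (\<lambda>z. z / (1 - z)) sequentially"
    if collatz_conjecture
    using uniform_limit_iterates[OF that] by blast
  have "compact (sphere (0::complex) (1/2))" "sphere (0::complex) (1/2) \<subseteq> diskD"
    by auto
  then show collatz_conjecture
    if "\<forall>K. compact K \<and> K \<subseteq> diskD \<longrightarrow>
     uniform_limit K (\<lambda>m. (opF ^^ m) (restrD (\<lambda>z. z + z ^ 2))) (\<lambda>z. z / (1 - z)) sequentially"
    using that not_uniform_limit_iterates by blast
qed

theorem mainTheorem12:
  shows "((\<forall>n::nat. n \<ge> 1 \<longrightarrow> sigma_inf n < \<infinity>)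
      \<longleftrightarrow> vector_space.dim fscale {h \<in> AD. opF h = h} = 2)
    \<and> ((\<forall>n::nat. n \<ge> 1 \<longrightarrow> sigma_inf n < \<infinity>)
      \<longleftrightarrow> restrD (\<lambda>z. z / (1 - z)) \<in> Zspace)
    \<and> ((\<forall>n::nat. n \<ge> 1 \<longrightarrow> sigma_inf n < \<infinity>)
      \<longleftrightarrow> (\<forall>K. compact K \<and> K \<subseteq> diskD \<longrightarrow>
             uniform_limit K (\<lambda>m. (opF ^^ m) (restrD (\<lambda>z. z + z ^ 2)))
                             (\<lambda>z. z / (1 - z)) sequentially))"
  unfolding collatz_conjecture_def[symmetric]
  by (intro conjI collatz_conjecture_iff_dim_fixed_points collatz_conjecture_iff_geometric_in_Zspace
      collatz_conjecture_iff_uniform_limit_iterates)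

end
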